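(* The elements $\alpha^{g,h}_{\chi,\psi}$, for $\chi\in X_N$ (with $\psi=\theta\chi^{-1}$) and $g,h$ relatively prime divisors of $N$, generate $H^\theta$ as an $\mathcal{O}$-module.
   Context: $p$ is an odd prime, $M$ a positive integer with $p\nmid M\varphi(M)$, $N=M$ or $Mp$, $N>1$, $\Delta=(\mathbb{Z}/N\mathbb{Z})^\times/\langle-1\rangle$. $H$ is a space of level $N$ modular symbols: a $\mathbb{Z}_p[\Delta]$-module spanned by symbols $[u:v]$ ($u,v\in\mathbb{Z}/N\mathbb{Z}$ generating the unit ideal) satisfying $[u:v]=[-u:-v]=-[-v:u]$, $[u:v]=[u:u+v]+[u+v:v]$, $\langle a\rangle[u:v]=[au:av]$. $\theta:\Delta\to\mathbb{C}_p^\times$ is a character, $\mathcal{O}=\mathbb{Z}_p[\mu_{\varphi(N)}]$, $X_N=\mathrm{Hom}((\mathbb{Z}/N\mathbb{Z})^\times,\mathcal{O}^\times)$, $e_\theta=\frac1{\varphi(N)}\sum_a\theta^{-1}(a)\langle a\rangle$, $H^\theta=e_\theta(H\otimes_{\mathbb{Z}_p}\mathcal{O})$, and $\alpha^{g,h}_{\chi,\psi}=\frac{1}{\varphi(N)^2}\sum_{a,b\in(\mathbb{Z}/N\mathbb{Z})^\times}\chi^{-1}(a)\psi^{-1}(b)[ga:hb]$. *)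

theory Defs
  imports "HOL-Number_Theory.Number_Theory"
begin

text \<open>Residues mod N are represented by naturals in {0..<N}.\<close>

definition units_mod :: "nat \<Rightarrow> nat set" where
  "units_mod N = {a. a < N \<and> coprime a N}"

definition unimod :: "nat \<Rightarrow> nat \<Rightarrow> nat \<Rightarrow> bool" where
  "unimod N u v \<longleftrightarrow> u < N \<and> v < N \<and> coprime (gcd u v) N"

definition minv :: "nat \<Rightarrow> nat \<Rightarrow> nat" where
  "minv N a = (THE b. b < N \<and> [a * b = 1] (mod N))"

text \<open>X_N = Hom((Z/N)^*, O^*), characters extended by 0 off the units\<close>
definition dirichlet_chars :: "nat \<Rightarrow> (nat \<Rightarrow> 'o::comm_ring_1) set" where
  "dirichlet_chars N = {\<chi>. \<chi> 1 = 1
      \<and> (\<forall>a\<in>units_mod N. \<forall>b\<in>units_mod N. \<chi> (a * b mod N) = \<chi> a * \<chi> b)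
      \<and> (\<forall>a. a \<notin> units_mod N \<longrightarrow> \<chi> a = 0)}"

definition char_inv :: "nat \<Rightarrow> (nat \<Rightarrow> 'o::comm_ring_1) \<Rightarrow> nat \<Rightarrow> 'o" where
  "char_inv N \<chi> a = (if a \<in> units_mod N then \<chi> (minv N a) else 0)"

definition nat_inv :: "nat \<Rightarrow> 'o::comm_ring_1" where
  "nat_inv n = (THE w. of_nat n * w = 1)"

text \<open>A space of level N modular symbols, already tensored up to the coefficient ring
  (the O-module spanned by the symbols sb u v = [u:v], with the Delta-action act a = <a>).\<close>
definition modsym_space ::
  "('o::comm_ring_1 \<Rightarrow> 'm::ab_group_add \<Rightarrow> 'm) \<Rightarrow> nat \<Rightarrow> (nat \<Rightarrow> nat \<Rightarrow> 'm)
     \<Rightarrow> (nat \<Rightarrow> 'm \<Rightarrow> 'm) \<Rightarrow> bool" where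
  "modsym_space smul N sb act \<longleftrightarrow>
     Modules.module smul
     \<and> (\<forall>u v. unimod N u v \<longrightarrow>
           sb u v = sb ((N - u) mod N) ((N - v) mod N)
         \<and> sb u v = - sb ((N - v) mod N) u
         \<and> sb u v = sb u ((u + v) mod N) + sb ((u + v) mod N) v)
     \<and> (\<forall>a\<in>units_mod N.
           (\<forall>c x. act a (smul c x) = smul c (act a x))
         \<and> (\<forall>x y. act a (x + y) = act a x + act a y)
         \<and> (\<forall>u v. unimod N u v \<longrightarrow> act a (sb u v) = sb (a * u mod N) (a * v mod N)))
     \<and> Modules.module.span smul {sb u v | u v. unimod N u v} = UNIV"

definition e_proj ::
  "('o::comm_ring_1 \<Rightarrow> 'm::ab_group_add \<Rightarrow> 'm) \<Rightarrow> (nat \<Rightarrow> 'm \<Rightarrow> 'm) \<Rightarrow> nat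
     \<Rightarrow> (nat \<Rightarrow> 'o) \<Rightarrow> 'm \<Rightarrow> 'm" where
  "e_proj smul act N \<theta> x =
     smul (nat_inv (totient N)) (\<Sum>a\<in>units_mod N. smul (char_inv N \<theta> a) (act a x))"

definition alpha ::
  "('o::comm_ring_1 \<Rightarrow> 'm::ab_group_add \<Rightarrow> 'm) \<Rightarrow> (nat \<Rightarrow> nat \<Rightarrow> 'm) \<Rightarrow> nat
     \<Rightarrow> nat \<Rightarrow> nat \<Rightarrow> (nat \<Rightarrow> 'o) \<Rightarrow> (nat \<Rightarrow> 'o) \<Rightarrow> 'm" where
  "alpha smul sb N g h \<chi> \<psi> =
     smul ((nat_inv (totient N))^2)
       (\<Sum>a\<in>units_mod N. \<Sum>b\<in>units_mod N.
          smul (char_inv N \<chi> a * char_inv N \<psi> b) (sb (g * a mod N) (h * b mod N)))"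

end

(* For a unimodular symbol [u:v] write u = g a, v = h b with g = gcd(u, N),
   h = gcd(v, N) and a, b units; g and h are coprime. Fourier inversion on the pair of units
   expresses [ga:hb] as the sum over all pairs of characters of chi(a) psi(b) alpha^{g,h}_{chi,psi}.
   Each alpha^{g,h}_{chi,psi} is an eigenvector of the diamond operators with character chi psi,
   so e_theta fixes it when chi psi = theta and kills it otherwise. Hence e_theta maps the
   spanning symbols into the span of the alpha^{g,h}_{chi,theta chi^{-1}}, which e_theta fixes.
   Inversion needs phi(N) invertible (p does not divide phi(N)) and enough characters: since O
   contains a primitive phi(N)-th root of unity, characters extend from subgroups one generator
   at a time, so they separate the units. *)

theory Submission
  imports Defs "HOL-Computational_Algebra.Polynomial"
begin

lemma mult_left_inverse_unique:
  fixes u v x :: "'a::comm_monoid_mult"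
  assumes "u * x = 1" and "v * x = 1"
  shows "u = v"
  by (metis assms mult.assoc mult.commute mult_1_right)

lemma nat_inv_eq:
  fixes w :: "'a::comm_ring_1"
  assumes "of_nat n * w = 1"
  shows "nat_inv n = w"
  unfolding nat_inv_def
proof (rule the_equality)
  fix v :: 'a
  assume "of_nat n * v = 1"
  then show "v = w"
    using mult_left_inverse_unique[of v "of_nat n" w] assms by (simp add: mult.commute)
qed (rule assms)

lemma prime_not_dvd_totient:
  fixes p M N :: nat
  assumes p: "prime p" and pM: "\<not> p dvd M * totient M" and N: "N = M \<or> N = M * p"
  shows "\<not> p dvd totient N"
proof -
  have "\<not> p dvd M" and "\<not> p dvd totient M"
    using pM by auto
  moreover have "\<not> p dvd p - 1"
    using prime_gt_1_nat[OF p] by (auto dest: dvd_imp_le)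
  moreover have "totient (M * p) = totient M * (p - 1)" if "\<not> p dvd M"
    using that totient_mult_coprime[of M p] totient_prime[OF p]
      prime_imp_coprime[OF p] by (simp add: coprime_commute)
  ultimately show ?thesis
    using N p by (auto simp: prime_dvd_mult_iff)
qed

text \<open>Witness: a = u/g + (N/g) * (product of the primes of N not dividing u/g).\<close>
lemma exists_coprime_mult_gcd_cong:
  fixes u N :: nat
  assumes "N \<noteq> 0"
  shows "\<exists>a. coprime a N \<and> [gcd u N * a = u] (mod N)"
proof -
  define g where "g = gcd u N"
  define u' where "u' = u div g"
  define N' where "N' = N div g"
  define P where "P = prime_factors N - {q. q dvd u'}"
  define a where "a = u' + N' * \<Prod>P"
  have cop: "coprime u' N'"
    using div_gcd_coprime[of u N] assms by (simp add: u'_def N'_def g_def)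
  have P_dvd_iff: "q dvd \<Prod>P \<longleftrightarrow> q \<in> P" if q: "prime q" for q
  proof -
    have fin: "finite P" and primes: "\<And>x. x \<in> P \<Longrightarrow> prime x"
      by (auto simp: P_def in_prime_factors_imp_prime)
    have "q dvd \<Prod>P \<longleftrightarrow> (\<exists>x\<in>P. q dvd x)"
      using prime_dvd_prod_iff[OF fin q] by simp
    also have "\<dots> \<longleftrightarrow> q \<in> P"
      using primes_dvd_imp_eq[OF q primes] by (metis dvd_refl)
    finally show ?thesis .
  qed
  have "coprime a N"
  proof (rule ccontr)
    assume "\<not> coprime a N"
    then obtain q where q: "prime q" "q dvd a" "q dvd N"
      by (metis coprime_iff_gcd_eq_1 gcd_dvd1 gcd_dvd2 dvd_trans prime_factor_nat)
    have qN: "q \<in> prime_factors N"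
      using q assms by (intro prime_factorsI) simp_all
    show False
    proof (cases "q dvd u'")
      case True
      then have "\<not> q dvd N'"
        using cop q(1) by (meson coprime_common_divisor not_prime_unit)
      moreover have "q dvd N' * \<Prod>P"
        using True q(2) by (simp add: a_def dvd_add_right_iff)
      ultimately have "q \<in> P"
        using q(1) P_dvd_iff by (simp add: prime_dvd_mult_iff)
      with True show False by (simp add: P_def)
    next
      case False
      then have "q dvd N' * \<Prod>P"
        using qN P_dvd_iff[OF q(1)] by (simp add: P_def)
      then show False
        using False q(2) by (simp add: a_def dvd_add_left_iff)
    qed
  qed
  moreover have "g * a = u + N * \<Prod>P"
    by (simp add: a_def u'_def N'_def g_def algebra_simps)
  then have "[g * a = u] (mod N)"
    by (simp add: cong_def)
  ultimately show ?thesis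
    unfolding g_def by blast
qed

lemma coprime_gcd_gcd:
  fixes u v N :: nat
  assumes "coprime (gcd u v) N"
  shows "coprime (gcd u N) (gcd v N)"
proof (rule coprimeI)
  fix c
  assume "c dvd gcd u N" "c dvd gcd v N"
  then have "c dvd gcd u v" "c dvd N"
    by auto
  then show "is_unit c"
    using coprime_common_divisor[OF assms] by blast
qed

lemma sum_swap_pairs:
  "(\<Sum>x\<in>A. \<Sum>y\<in>B. \<Sum>u\<in>C. \<Sum>v\<in>D. f x y u v) = (\<Sum>u\<in>C. \<Sum>v\<in>D. \<Sum>x\<in>A. \<Sum>y\<in>B. f x y u v)"
proof -
  have "(\<Sum>x\<in>A. \<Sum>y\<in>B. \<Sum>u\<in>C. \<Sum>v\<in>D. f x y u v) = (\<Sum>x\<in>A. \<Sum>u\<in>C. \<Sum>y\<in>B. \<Sum>v\<in>D. f x y u v)"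
    by (intro sum.cong refl sum.swap)
  also have "\<dots> = (\<Sum>u\<in>C. \<Sum>x\<in>A. \<Sum>y\<in>B. \<Sum>v\<in>D. f x y u v)"
    by (rule sum.swap)
  also have "\<dots> = (\<Sum>u\<in>C. \<Sum>x\<in>A. \<Sum>v\<in>D. \<Sum>y\<in>B. f x y u v)"
    by (intro sum.cong refl sum.swap)
  also have "\<dots> = (\<Sum>u\<in>C. \<Sum>v\<in>D. \<Sum>x\<in>A. \<Sum>y\<in>B. f x y u v)"
    by (intro sum.cong refl sum.swap)
  finally show ?thesis .
qed

section \<open>Units modulo N and Dirichlet characters\<close>

locale units_mod_ring =
  fixes N :: nat
  assumes N_gt_1: "N > 1"
begin

abbreviation G :: "nat set" where "G \<equiv> units_mod N"

lemma units_mod_iff: "a \<in> G \<longleftrightarrow> a < N \<and> coprime a N"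
  by (simp add: units_mod_def)

lemma one_in_units_mod [simp]: "1 \<in> G" "Suc 0 \<in> G"
  using N_gt_1 by (simp_all add: units_mod_iff)

lemma units_mod_mod [simp]: "a \<in> G \<Longrightarrow> a mod N = a"
  by (simp add: units_mod_iff)

lemma units_mod_mult [simp]: "a \<in> G \<Longrightarrow> b \<in> G \<Longrightarrow> a * b mod N \<in> G"
  using N_gt_1 by (simp add: units_mod_iff)

lemma units_mod_power [simp]: "a \<in> G \<Longrightarrow> a ^ n mod N \<in> G"
  using N_gt_1 by (simp add: units_mod_iff)

lemma finite_units_mod [simp]: "finite G"
  by (simp add: units_mod_def)

lemma card_units_mod: "card G = totient N"
proof -
  have "x < N" if "x \<le> N" "coprime x N" for x
    using that N_gt_1 by (cases "x = N") auto
  then have "G = totatives N"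
    using N_gt_1 by (auto simp: units_mod_iff totatives_def intro: Nat.gr0I)
  then show ?thesis
    by (simp add: totient_def)
qed

lemma totient_pos: "totient N > 0"
  using N_gt_1 by simp

lemma power_totient_mod: "a \<in> G \<Longrightarrow> a ^ totient N mod N = 1"
  using euler_theorem[of a N] N_gt_1 by (simp add: units_mod_iff cong_def)

lemma minv_eq:
  assumes a: "a \<in> G"
  shows "minv N a = a ^ (totient N - 1) mod N"
  unfolding minv_def
proof (rule the_equality)
  have "a * a ^ (totient N - 1) = a ^ totient N"
    using totient_pos by (simp flip: power_Suc)
  then show inverse: "a ^ (totient N - 1) mod N < N \<and> [a * (a ^ (totient N - 1) mod N) = 1] (mod N)"
    using power_totient_mod[OF a] N_gt_1 by (simp add: cong_def mod_mult_right_eq)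
  show "b = a ^ (totient N - 1) mod N" if "b < N \<and> [a * b = 1] (mod N)" for b
    using that inverse a cong_mult_lcancel_nat[of a N] cong_less_modulus_unique_nat
    by (metis cong_sym cong_trans units_mod_iff)
qed

lemma minv_in_units_mod [simp]: "a \<in> G \<Longrightarrow> minv N a \<in> G"
  by (simp add: minv_eq)

lemma mult_minv_mod [simp]: "a \<in> G \<Longrightarrow> a * minv N a mod N = 1"
  using power_totient_mod[of a] totient_pos
  by (simp add: minv_eq mod_mult_right_eq flip: power_Suc)

lemma units_mod_mult_cancel:
  assumes "c \<in> G" "x < N" "y < N" "c * x mod N = c * y mod N"
  shows "x = y"
proof -
  have "[c * x = c * y] (mod N)"
    using assms(4) by (simp add: cong_def)
  then have "[x = y] (mod N)"
    using assms(1) cong_mult_lcancel_nat by (auto simp: units_mod_iff)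
  then show ?thesis
    using assms(2,3) cong_less_modulus_unique_nat by blast
qed

lemma bij_betw_mult_units_mod:
  assumes c: "c \<in> G"
  shows "bij_betw (\<lambda>a. c * a mod N) G G"
proof -
  have "inj_on (\<lambda>a. c * a mod N) G"
    by (rule inj_onI) (metis units_mod_mult_cancel[OF c] units_mod_iff)
  moreover have "(\<lambda>a. c * a mod N) ` G \<subseteq> G"
    using c by auto
  ultimately show ?thesis
    by (simp add: bij_betw_def card_image card_subset_eq)
qed

lemma sum_units_mod_mult_reindex:
  assumes "c \<in> G"
  shows "(\<Sum>a\<in>G. f (c * a mod N)) = (\<Sum>a\<in>G. f a)"
  by (rule sum.reindex_bij_betw[OF bij_betw_mult_units_mod[OF assms]])

lemma dirichlet_char_1: "\<chi> \<in> dirichlet_chars N \<Longrightarrow> \<chi> 1 = 1"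
  by (simp add: dirichlet_chars_def)

lemma dirichlet_char_mult:
  "\<chi> \<in> dirichlet_chars N \<Longrightarrow> a \<in> G \<Longrightarrow> b \<in> G \<Longrightarrow> \<chi> (a * b mod N) = \<chi> a * \<chi> b"
  by (simp add: dirichlet_chars_def)

lemma dirichlet_char_nonunit: "\<chi> \<in> dirichlet_chars N \<Longrightarrow> a \<notin> G \<Longrightarrow> \<chi> a = 0"
  by (simp add: dirichlet_chars_def)

lemma dirichlet_char_power:
  assumes "\<chi> \<in> dirichlet_chars N" "a \<in> G"
  shows "\<chi> (a ^ n mod N) = \<chi> a ^ n"
proof (induction n)
  case (Suc n)
  have "a ^ Suc n mod N = a * (a ^ n mod N) mod N"
    by (simp add: mod_mult_right_eq)
  then show ?case
    using Suc dirichlet_char_mult[OF assms units_mod_power[OF assms(2)]] by simp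
qed (use assms N_gt_1 dirichlet_char_1 in simp)

lemma char_inv_mult_self:
  assumes \<chi>: "\<chi> \<in> dirichlet_chars N" and a: "a \<in> G"
  shows "char_inv N \<chi> a * \<chi> a = 1"
proof -
  have "\<chi> a * \<chi> (minv N a) = \<chi> (a * minv N a mod N)"
    using dirichlet_char_mult[OF \<chi> a minv_in_units_mod[OF a]] ..
  also have "\<dots> = 1"
    using a dirichlet_char_1[OF \<chi>] by simp
  finally show ?thesis
    using a by (simp add: char_inv_def mult.commute)
qed

lemma dirichlet_char_unit_nonzero:
  fixes \<chi> :: "nat \<Rightarrow> 'a::idom"
  assumes "\<chi> \<in> dirichlet_chars N" "a \<in> G"
  shows "\<chi> a \<noteq> 0"
  using char_inv_mult_self[OF assms] by auto

lemma char_inv_in_dirichlet_chars: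
  assumes \<chi>: "\<chi> \<in> dirichlet_chars N"
  shows "char_inv N \<chi> \<in> dirichlet_chars N"
proof -
  have "char_inv N \<chi> (a * b mod N) = char_inv N \<chi> a * char_inv N \<chi> b" if "a \<in> G" "b \<in> G" for a b
  proof (rule mult_left_inverse_unique)
    show "char_inv N \<chi> (a * b mod N) * \<chi> (a * b mod N) = 1"
      using that \<chi> by (simp add: char_inv_mult_self)
    have "char_inv N \<chi> a * char_inv N \<chi> b * \<chi> (a * b mod N)
          = (char_inv N \<chi> a * \<chi> a) * (char_inv N \<chi> b * \<chi> b)"
      using that \<chi> by (simp add: dirichlet_char_mult algebra_simps)
    then show "char_inv N \<chi> a * char_inv N \<chi> b * \<chi> (a * b mod N) = 1"
      using that \<chi> by (simp add: char_inv_mult_self)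
  qed
  moreover have "char_inv N \<chi> 1 = 1"
    using char_inv_mult_self[OF \<chi> one_in_units_mod(1)] dirichlet_char_1[OF \<chi>] by simp
  ultimately show ?thesis
    by (auto simp: dirichlet_chars_def char_inv_def)
qed

lemma dirichlet_chars_mult:
  "\<chi> \<in> dirichlet_chars N \<Longrightarrow> \<psi> \<in> dirichlet_chars N \<Longrightarrow> (\<lambda>a. \<chi> a * \<psi> a) \<in> dirichlet_chars N"
  by (auto simp: dirichlet_chars_def)

lemma char_inv_mult_shift:
  assumes \<chi>: "\<chi> \<in> dirichlet_chars N" and c: "c \<in> G" and a: "a \<in> G"
  shows "char_inv N \<chi> a = \<chi> c * char_inv N \<chi> (c * a mod N)"
proof (rule mult_left_inverse_unique)
  show "char_inv N \<chi> a * \<chi> a = 1"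
    using char_inv_mult_self[OF \<chi> a] .
  show "\<chi> c * char_inv N \<chi> (c * a mod N) * \<chi> a = 1"
    using char_inv_mult_self[OF \<chi> units_mod_mult[OF c a]] dirichlet_char_mult[OF \<chi> c a]
    by (simp add: ac_simps)
qed

lemma dirichlet_char_twist_iff:
  fixes \<chi> \<psi> \<theta> :: "nat \<Rightarrow> 'a::comm_ring_1"
  assumes "\<chi> \<in> dirichlet_chars N" "\<psi> \<in> dirichlet_chars N" "\<theta> \<in> dirichlet_chars N"
  shows "(\<forall>c\<in>G. \<chi> c * \<psi> c = \<theta> c) \<longleftrightarrow> \<psi> = (\<lambda>b. \<theta> b * char_inv N \<chi> b)"
proof
  assume "\<forall>c\<in>G. \<chi> c * \<psi> c = \<theta> c"
  then have "\<psi> c = \<theta> c * char_inv N \<chi> c" if "c \<in> G" for c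
    using char_inv_mult_self[OF assms(1) that] that by (metis mult.assoc mult.commute mult_1_right)
  then show "\<psi> = (\<lambda>b. \<theta> b * char_inv N \<chi> b)"
    using dirichlet_char_nonunit[OF assms(2)] dirichlet_char_nonunit[OF assms(3)] by fastforce
next
  assume \<psi>: "\<psi> = (\<lambda>b. \<theta> b * char_inv N \<chi> b)"
  show "\<forall>c\<in>G. \<chi> c * \<psi> c = \<theta> c"
  proof
    fix c
    assume c: "c \<in> G"
    have "\<chi> c * \<psi> c = \<theta> c * (char_inv N \<chi> c * \<chi> c)"
      by (simp add: \<psi> ac_simps)
    then show "\<chi> c * \<psi> c = \<theta> c"
      using char_inv_mult_self[OF assms(1) c] by simp
  qed
qed

lemma sum_dirichlet_char:
  fixes \<rho> :: "nat \<Rightarrow> 'a::idom"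
  assumes \<rho>: "\<rho> \<in> dirichlet_chars N"
  shows "(\<Sum>c\<in>G. \<rho> c) = (if \<forall>c\<in>G. \<rho> c = 1 then of_nat (totient N) else 0)"
proof (cases "\<forall>c\<in>G. \<rho> c = 1")
  case True
  then show ?thesis
    by (simp add: card_units_mod)
next
  case False
  then obtain c where c: "c \<in> G" "\<rho> c \<noteq> 1"
    by auto
  have "(\<Sum>a\<in>G. \<rho> a) = (\<Sum>a\<in>G. \<rho> (c * a mod N))"
    using sum_units_mod_mult_reindex[OF c(1), of \<rho>] by simp
  also have "\<dots> = \<rho> c * (\<Sum>a\<in>G. \<rho> a)"
    using \<rho> c by (simp add: dirichlet_char_mult sum_distrib_left)
  finally have "(1 - \<rho> c) * (\<Sum>a\<in>G. \<rho> a) = 0"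
    by (simp add: algebra_simps)
  then have "(\<Sum>a\<in>G. \<rho> a) = 0"
    using c by simp
  then show ?thesis
    by (simp only: if_not_P[OF False])
qed

lemma unimod_mult_units:
  assumes gh: "coprime g h" and a: "a \<in> G" and b: "b \<in> G"
  shows "unimod N (g * a mod N) (h * b mod N)"
proof -
  define d where "d = gcd (gcd (g * a mod N) (h * b mod N)) N"
  have dN: "d dvd N"
    by (simp add: d_def)
  have "d dvd g * a mod N"
    unfolding d_def by (meson dvd_trans gcd_dvd1)
  have "d dvd h * b mod N"
    unfolding d_def by (meson dvd_trans gcd_dvd1 gcd_dvd2)
  then have "d dvd g * a" "d dvd h * b"
    using dN \<open>d dvd g * a mod N\<close> by (simp_all add: dvd_mod_iff)
  moreover have "coprime d a"
    using a dN by (meson units_mod_iff coprime_commute coprime_divisors dvd_refl)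
  moreover have "coprime d b"
    using b dN by (meson units_mod_iff coprime_commute coprime_divisors dvd_refl)
  ultimately have "d dvd g" "d dvd h"
    by (simp_all add: coprime_dvd_mult_left_iff)
  then have "d = 1"
    by (rule coprime_common_divisor_nat[OF gh])
  then have "coprime (gcd (g * a mod N) (h * b mod N)) N"
    unfolding d_def coprime_iff_gcd_eq_1 .
  then show ?thesis
    using N_gt_1 by (simp add: unimod_def)
qed

lemma exists_unit_mult_gcd:
  assumes "u < N"
  shows "\<exists>a\<in>G. gcd u N * a mod N = u"
proof -
  obtain a where "coprime a N" "[gcd u N * a = u] (mod N)"
    using exists_coprime_mult_gcd_cong[of N u] N_gt_1 by auto
  then have "a mod N \<in> G" "gcd u N * (a mod N) mod N = u"
    using N_gt_1 assms by (simp_all add: units_mod_iff cong_def mod_mult_right_eq)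
  then show ?thesis
    by blast
qed

end

section \<open>Characters separate the units\<close>

context units_mod_ring
begin

definition units_subgroup :: "nat set \<Rightarrow> bool" where
  "units_subgroup H \<longleftrightarrow> H \<subseteq> G \<and> 1 \<in> H \<and> (\<forall>x\<in>H. \<forall>y\<in>H. x * y mod N \<in> H)"

definition partial_char :: "nat set \<Rightarrow> (nat \<Rightarrow> 'a::comm_monoid_mult) \<Rightarrow> bool" where
  "partial_char H f \<longleftrightarrow> f 1 = 1 \<and> (\<forall>x\<in>H. \<forall>y\<in>H. f (x * y mod N) = f x * f y)"

definition adjoin :: "nat set \<Rightarrow> nat \<Rightarrow> nat set" where
  "adjoin H x = {h * x ^ i mod N | h i. h \<in> H}"

lemma units_subgroup_power:
  assumes H: "units_subgroup H" and x: "x \<in> H"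
  shows "x ^ n mod N \<in> H"
proof (induction n)
  case (Suc n)
  have "x ^ Suc n mod N = x * (x ^ n mod N) mod N"
    by (simp add: mod_mult_right_eq)
  then show ?case
    using Suc H x by (simp add: units_subgroup_def)
qed (use H N_gt_1 in \<open>simp add: units_subgroup_def\<close>)

lemma units_subgroup_inverse:
  assumes "units_subgroup H" "y \<in> H"
  shows "minv N y \<in> H" "y * minv N y mod N = 1"
proof -
  have "y \<in> G"
    using assms by (auto simp: units_subgroup_def)
  then show "y * minv N y mod N = 1"
    by (rule mult_minv_mod)
  show "minv N y \<in> H"
    using \<open>y \<in> G\<close> units_subgroup_power[OF assms] by (simp add: minv_eq)
qed

lemma partial_char_power:
  assumes H: "units_subgroup H" and f: "partial_char H f" and x: "x \<in> H"
  shows "f (x ^ n mod N) = f x ^ n"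
proof (induction n)
  case (Suc n)
  have "x ^ Suc n mod N = x * (x ^ n mod N) mod N"
    by (simp add: mod_mult_right_eq)
  then show ?case
    using Suc f x units_subgroup_power[OF H x, of n] by (simp add: partial_char_def)
qed (use f N_gt_1 in \<open>simp add: partial_char_def\<close>)

lemma units_subgroup_power_cancel:
  assumes H: "units_subgroup H" and m: "x ^ m mod N \<in> H" and mk: "x ^ (m + k) mod N \<in> H"
  shows "x ^ k mod N \<in> H"
proof -
  define y where "y = x ^ m mod N"
  have y: "minv N y \<in> H" "y * minv N y mod N = 1"
    using m units_subgroup_inverse[OF H, of y] by (simp_all add: y_def)
  have "(x ^ (m + k) mod N) * minv N y mod N = x ^ k * (x ^ m * minv N y) mod N"
    by (simp add: mod_mult_left_eq mod_mult_right_eq power_add ac_simps)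
  also have "\<dots> = x ^ k * (x ^ m * minv N y mod N) mod N"
    by (simp add: mod_mult_right_eq)
  also have "x ^ m * minv N y mod N = y * minv N y mod N"
    by (simp add: y_def mod_mult_left_eq)
  finally have "(x ^ (m + k) mod N) * minv N y mod N = x ^ k mod N"
    using y(2) by simp
  moreover have "(x ^ (m + k) mod N) * minv N y mod N \<in> H"
    using mk y(1) H by (simp add: units_subgroup_def)
  ultimately show ?thesis
    by simp
qed

lemma power_mem_units_subgroup_iff:
  assumes H: "units_subgroup H" and x: "x \<in> G"
  obtains m where "m > 0" "m dvd totient N" "\<And>n. x ^ n mod N \<in> H \<longleftrightarrow> m dvd n"
proof -
  let ?P = "\<lambda>n. 0 < n \<and> x ^ n mod N \<in> H"
  define m where "m = (LEAST n. ?P n)"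
  have "?P (totient N)"
    using power_totient_mod[OF x] totient_pos H by (simp add: units_subgroup_def)
  then have m: "?P m"
    unfolding m_def by (rule LeastI)
  have below_m: "\<not> ?P n" if "n < m" for n
    using not_less_Least[of n ?P] that unfolding m_def by blast
  have "m dvd n" if "x ^ n mod N \<in> H" for n
    using that
  proof (induction n rule: less_induct)
    case (less n)
    show ?case
    proof (cases "n < m")
      case True
      then show ?thesis
        using below_m less.prems by fastforce
    next
      case False
      then have "x ^ (m + (n - m)) mod N \<in> H"
        using less.prems by simp
      then have "x ^ (n - m) mod N \<in> H"
        by (rule units_subgroup_power_cancel[OF H conjunct2[OF m]])
      then have "m dvd n - m"
        using less.IH[of "n - m"] m False by simp
      then show ?thesis
        using False by (metis dvd_add_right_iff le_add_diff_inverse not_less dvd_refl)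
    qed
  qed
  moreover have "x ^ n mod N \<in> H" if "m dvd n" for n
    using that units_subgroup_power[OF H, of "x ^ m mod N"] m
    by (auto simp: power_mult power_mod)
  moreover have "m dvd totient N"
    using calculation \<open>?P (totient N)\<close> by blast
  ultimately show ?thesis
    using that m by blast
qed

lemma adjoin_mult:
  "(h1 * x ^ i mod N) * (h2 * x ^ j mod N) mod N = (h1 * h2 mod N) * x ^ (i + j) mod N"
proof -
  have "(h1 * x ^ i mod N) * (h2 * x ^ j mod N) mod N = (h1 * h2) * x ^ (i + j) mod N"
    by (simp add: mod_mult_eq power_add ac_simps)
  then show ?thesis
    by (simp add: mod_mult_left_eq)
qed

lemma adjoin_mem [intro]: "h \<in> H \<Longrightarrow> h * x ^ i mod N \<in> adjoin H x"
  by (auto simp: adjoin_def)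

lemma units_subgroup_adjoin:
  assumes H: "units_subgroup H" and x: "x \<in> G"
  shows "units_subgroup (adjoin H x)" "H \<subseteq> adjoin H x" "x \<in> adjoin H x"
proof -
  have "1 \<in> H" "H \<subseteq> G"
    using H by (auto simp: units_subgroup_def)
  have "h * x ^ i mod N \<in> G" if "h \<in> H" for h i
    using that \<open>H \<subseteq> G\<close> x units_mod_mult[of h "x ^ i mod N"] by (auto simp: mod_mult_right_eq)
  moreover have "y * z mod N \<in> adjoin H x" if yz: "y \<in> adjoin H x" "z \<in> adjoin H x" for y z
  proof -
    obtain h1 i h2 j where "h1 \<in> H" "h2 \<in> H" "y = h1 * x ^ i mod N" "z = h2 * x ^ j mod N"
      using yz unfolding adjoin_def by blast
    then show ?thesis
      using H adjoin_mem[of "h1 * h2 mod N" H x "i + j"] by (simp add: adjoin_mult units_subgroup_def)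
  qed
  moreover have "h \<in> adjoin H x" if "h \<in> H" for h
    using adjoin_mem[OF that, of x 0] that \<open>H \<subseteq> G\<close> by auto
  moreover have "x \<in> adjoin H x"
    using adjoin_mem[OF \<open>1 \<in> H\<close>, of x 1] x by simp
  ultimately show "units_subgroup (adjoin H x)" "H \<subseteq> adjoin H x" "x \<in> adjoin H x"
    using \<open>1 \<in> H\<close> by (auto simp: units_subgroup_def adjoin_def)
qed

text \<open>Extending f from H to the subgroup generated by H and x, with x \<mapsto> w, is
  consistent because w^m = f(x^m) for the order m of x modulo H.\<close>
lemma adjoin_value_well_defined:
  assumes H: "units_subgroup H" and f: "partial_char H f" and x: "x \<in> G"
    and order: "\<And>n. x ^ n mod N \<in> H \<longleftrightarrow> m dvd n" and w: "w ^ m = f (x ^ m mod N)"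
    and h: "h \<in> H" "h' \<in> H" and eq: "h * x ^ i mod N = h' * x ^ j mod N" and ij: "i \<le> j"
  shows "f h * w ^ i = f h' * w ^ j"
proof -
  define d where "d = j - i"
  have "[x ^ i * h = x ^ i * (h' * x ^ d)] (mod N)"
    using eq ij by (simp add: cong_def d_def ac_simps flip: power_add)
  then have "[h = h' * x ^ d] (mod N)"
    using x cong_mult_lcancel_nat[of "x ^ i" N] by (simp add: units_mod_iff)
  then have "[minv N h' * h = (h' * minv N h') * x ^ d] (mod N)"
    by (metis cong_scalar_left mult.assoc mult.commute)
  also have "[(h' * minv N h') * x ^ d = 1 * x ^ d] (mod N)"
    using units_subgroup_inverse(2)[OF H h(2)] N_gt_1 by (intro cong_scalar_right) (simp add: cong_def)
  finally have xd: "minv N h' * h mod N = x ^ d mod N"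
    by (simp add: cong_def)
  have hd: "h = h' * (x ^ d mod N) mod N"
    using \<open>[h = h' * x ^ d] (mod N)\<close> h H by (auto simp: cong_def units_subgroup_def mod_mult_right_eq)
  have "x ^ d mod N \<in> H"
    using xd units_subgroup_inverse(1)[OF H h(2)] h(1) H unfolding units_subgroup_def by metis
  then obtain q where q: "d = m * q"
    using order by blast
  have "f (x ^ d mod N) = f (x ^ m mod N) ^ q"
    using partial_char_power[OF H f, of "x ^ m mod N" q] order
    by (simp add: q power_mult power_mod)
  then have "f h = f h' * w ^ d"
    using hd f h(2) \<open>x ^ d mod N \<in> H\<close> by (simp add: partial_char_def w q power_mult)
  then show ?thesis
    using ij by (simp add: d_def ac_simps flip: power_add)
qed

lemma partial_char_adjoin:
  assumes H: "units_subgroup H" and f: "partial_char H f" and x: "x \<in> G"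
    and order: "\<And>n. x ^ n mod N \<in> H \<longleftrightarrow> m dvd n" and w: "w ^ m = f (x ^ m mod N)"
  obtains f' where "partial_char (adjoin H x) f'" "\<And>h. h \<in> H \<Longrightarrow> f' h = f h" "f' x = w"
proof -
  have consistent: "f h * w ^ i = f h' * w ^ j"
    if h: "h \<in> H" "h' \<in> H" and eq: "h * x ^ i mod N = h' * x ^ j mod N" for h h' i j
  proof (cases "i \<le> j")
    case True
    then show ?thesis
      using adjoin_value_well_defined[OF H f x order w h eq] by simp
  next
    case False
    then show ?thesis
      using adjoin_value_well_defined[OF H f x order w h(2,1) eq[symmetric]] by simp
  qed
  define f' where "f' y = (SOME v. \<exists>h\<in>H. \<exists>i. y = h * x ^ i mod N \<and> v = f h * w ^ i)" for y
  have f'_eq: "f' (h * x ^ i mod N) = f h * w ^ i" if h: "h \<in> H" for h i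
  proof -
    have "\<exists>v. \<exists>h'\<in>H. \<exists>j. h * x ^ i mod N = h' * x ^ j mod N \<and> v = f h' * w ^ j"
      using h by blast
    from someI_ex[OF this] obtain h' j where "h' \<in> H" "h * x ^ i mod N = h' * x ^ j mod N"
      "f' (h * x ^ i mod N) = f h' * w ^ j"
      unfolding f'_def by blast
    then show ?thesis
      using consistent[OF h] by metis
  qed
  have "1 \<in> H" "H \<subseteq> G" "f 1 = 1"
    using H f by (auto simp: units_subgroup_def partial_char_def)
  have f'_H: "f' h = f h" if "h \<in> H" for h
    using f'_eq[OF that, of 0] that \<open>H \<subseteq> G\<close> by auto
  have "f' x = w"
    using f'_eq[OF \<open>1 \<in> H\<close>, of 1] x \<open>f 1 = 1\<close> by simp
  have "f' (y * z mod N) = f' y * f' z" if yz: "y \<in> adjoin H x" "z \<in> adjoin H x" for y z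
  proof -
    obtain h1 i h2 j where h: "h1 \<in> H" "h2 \<in> H" and y: "y = h1 * x ^ i mod N"
      and z: "z = h2 * x ^ j mod N"
      using yz unfolding adjoin_def by blast
    have "h1 * h2 mod N \<in> H"
      using h H by (simp add: units_subgroup_def)
    have "f' (y * z mod N) = f' ((h1 * h2 mod N) * x ^ (i + j) mod N)"
      by (simp add: y z adjoin_mult)
    also have "\<dots> = f (h1 * h2 mod N) * w ^ (i + j)"
      by (rule f'_eq) fact
    also have "\<dots> = (f h1 * w ^ i) * (f h2 * w ^ j)"
      using f h by (simp add: partial_char_def power_add ac_simps)
    also have "\<dots> = f' y * f' z"
      by (simp add: y z f'_eq h)
    finally show ?thesis .
  qed
  then have "partial_char (adjoin H x) f'"
    using f'_H \<open>1 \<in> H\<close> \<open>f 1 = 1\<close> by (simp add: partial_char_def)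
  then show ?thesis
    using that f'_H \<open>f' x = w\<close> by blast
qed

end

locale units_mod_root = units_mod_ring +
  fixes \<zeta> :: "'a::idom"
  assumes zeta_totient: "\<zeta> ^ totient N = 1"
    and zeta_primitive: "\<And>k. 0 < k \<Longrightarrow> k < totient N \<Longrightarrow> \<zeta> ^ k \<noteq> 1"
begin

abbreviation chars :: "(nat \<Rightarrow> 'a) set" where "chars \<equiv> dirichlet_chars N"

lemma power_zeta_eq_1_iff: "\<zeta> ^ n = 1 \<longleftrightarrow> totient N dvd n"
proof -
  have "\<zeta> ^ n = \<zeta> ^ (totient N * (n div totient N) + n mod totient N)"
    by simp
  also have "\<dots> = \<zeta> ^ (n mod totient N)"
    by (simp only: power_add power_mult zeta_totient) simp
  finally show ?thesis
    using zeta_primitive[of "n mod totient N"] totient_pos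
    by (auto simp: dvd_eq_mod_eq_0)
qed

lemma inj_on_power_zeta: "inj_on (\<lambda>k. \<zeta> ^ k) {..<totient N}"
proof -
  have "\<zeta> \<noteq> 0"
    using zeta_totient totient_pos by (cases "totient N") auto
  have le: "i = j" if "i \<le> j" "j < totient N" "\<zeta> ^ i = \<zeta> ^ j" for i j
  proof -
    have "\<zeta> ^ i * \<zeta> ^ (j - i) = \<zeta> ^ j"
      using that(1) by (simp flip: power_add)
    also have "\<dots> = \<zeta> ^ i * 1"
      using that(3) by simp
    finally have "\<zeta> ^ i * \<zeta> ^ (j - i) = \<zeta> ^ i * 1" .
    then have "\<zeta> ^ (j - i) = 1"
      using \<open>\<zeta> \<noteq> 0\<close> mult_left_cancel[of "\<zeta> ^ i" "\<zeta> ^ (j - i)" 1] by simp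
    then show ?thesis
      using that by (auto simp: power_zeta_eq_1_iff dest: dvd_imp_le)
  qed
  show ?thesis
  proof (rule inj_onI)
    fix i j
    assume "i \<in> {..<totient N}" "j \<in> {..<totient N}" "\<zeta> ^ i = \<zeta> ^ j"
    then show "i = j"
      using le[of i j] le[of j i] by (cases "i \<le> j") auto
  qed
qed

text \<open>The powers of \<zeta> are totient N distinct roots of X^(totient N) - 1, hence all of them.\<close>
lemma root_of_unity_eq_power_zeta:
  assumes "y ^ totient N = 1"
  shows "\<exists>k<totient N. y = \<zeta> ^ k"
proof -
  define p :: "'a poly" where "p = monom 1 (totient N) - 1"
  have roots: "{y::'a. y ^ totient N = 1} = {y. poly p y = 0}"
    by (simp add: p_def poly_monom)
  have "poly p 0 \<noteq> 0"
    using totient_pos by (simp add: p_def poly_monom power_0_left)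
  then have "p \<noteq> 0"
    by auto
  have "degree p \<le> totient N"
    unfolding p_def by (intro degree_diff_le) (simp_all add: degree_monom_le)
  then have "finite {y::'a. y ^ totient N = 1}" "card {y::'a. y ^ totient N = 1} \<le> totient N"
    unfolding roots using poly_roots_finite[OF \<open>p \<noteq> 0\<close>] card_poly_roots_bound[OF \<open>p \<noteq> 0\<close>]
    by simp_all
  moreover have "(\<zeta> ^ k) ^ totient N = 1" for k
  proof -
    have "(\<zeta> ^ k) ^ totient N = (\<zeta> ^ totient N) ^ k"
      by (simp only: mult.commute flip: power_mult)
    then show ?thesis
      by (simp add: zeta_totient)
  qed
  then have "(\<lambda>k. \<zeta> ^ k) ` {..<totient N} \<subseteq> {y::'a. y ^ totient N = 1}"
    by auto
  moreover have "card ((\<lambda>k. \<zeta> ^ k) ` {..<totient N}) = totient N"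
    using inj_on_power_zeta by (simp add: card_image)
  ultimately have "(\<lambda>k. \<zeta> ^ k) ` {..<totient N} = {y::'a. y ^ totient N = 1}"
    by (intro card_seteq) auto
  then show ?thesis
    using assms by auto
qed

lemma dirichlet_char_power_zeta:
  assumes "\<chi> \<in> chars" "a \<in> G"
  shows "\<exists>k<totient N. \<chi> a = \<zeta> ^ k"
proof -
  have "\<chi> a ^ totient N = 1"
    using dirichlet_char_power[OF assms, of "totient N"] power_totient_mod[OF assms(2)]
      dirichlet_char_1[OF assms(1)] by simp
  then show ?thesis
    by (rule root_of_unity_eq_power_zeta)
qed

lemma finite_dirichlet_chars: "finite chars"
proof -
  define Z where "Z = (\<lambda>k. \<zeta> ^ k) ` {..<totient N}"
  define extend where "extend f = (\<lambda>a. if a \<in> G then f a else 0)" for f :: "nat \<Rightarrow> 'a"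
  have "chars \<subseteq> extend ` (PiE G (\<lambda>_. Z))"
  proof
    fix \<chi>
    assume \<chi>: "\<chi> \<in> chars"
    have "\<chi> = extend (restrict \<chi> G)"
      using dirichlet_char_nonunit[OF \<chi>] by (auto simp: extend_def)
    moreover have "restrict \<chi> G \<in> PiE G (\<lambda>_. Z)"
      using dirichlet_char_power_zeta[OF \<chi>] by (auto simp: Z_def)
    ultimately show "\<chi> \<in> extend ` (PiE G (\<lambda>_. Z))"
      by blast
  qed
  moreover have "finite (PiE G (\<lambda>_. Z))"
    by (simp add: Z_def finite_PiE)
  ultimately show ?thesis
    by (meson finite_imageI finite_subset)
qed

lemma exists_root_of_partial_char:
  fixes f :: "nat \<Rightarrow> 'a"
  assumes H: "units_subgroup H" and f: "partial_char H f" and x: "x \<in> G"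
    and m: "m dvd totient N" and xm: "x ^ m mod N \<in> H"
  obtains w where "w ^ m = f (x ^ m mod N)"
proof -
  obtain q where q: "totient N = m * q"
    using m by blast
  then have "q > 0"
    using totient_pos by (cases q) auto
  have "f (x ^ m mod N) ^ q = f ((x ^ m mod N) ^ q mod N)"
    using partial_char_power[OF H f xm] by simp
  also have "(x ^ m mod N) ^ q mod N = 1"
    using power_totient_mod[OF x] by (simp add: q power_mult power_mod)
  finally have fq: "f (x ^ m mod N) ^ q = 1"
    using f by (simp add: partial_char_def)
  then have "f (x ^ m mod N) ^ totient N = 1"
    by (simp add: q mult.commute[of m] power_mult)
  then obtain k where k: "f (x ^ m mod N) = \<zeta> ^ k"
    using root_of_unity_eq_power_zeta by blast
  then have "m * q dvd k * q"
    using fq power_zeta_eq_1_iff q by (simp flip: power_mult)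
  then obtain l where "k = m * l"
    using \<open>q > 0\<close> by (auto elim: dvdE)
  then have "(\<zeta> ^ l) ^ m = f (x ^ m mod N)"
    using k by (simp add: mult.commute flip: power_mult)
  then show ?thesis
    by (rule that)
qed

lemma partial_char_extends:
  fixes f :: "nat \<Rightarrow> 'a"
  assumes "units_subgroup H" "partial_char H f"
  shows "\<exists>\<chi>\<in>chars. \<forall>h\<in>H. \<chi> h = f h"
  using assms
proof (induction "card (G - H)" arbitrary: H f rule: less_induct)
  case less
  show ?case
  proof (cases "G \<subseteq> H")
    case True
    then have "H = G"
      using less.prems by (auto simp: units_subgroup_def)
    then have "(\<lambda>a. if a \<in> G then f a else 0) \<in> chars"
      using less.prems by (auto simp: dirichlet_chars_def partial_char_def)
    then show ?thesis
      using \<open>H = G\<close> by (intro bexI) auto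
  next
    case False
    then obtain x where x: "x \<in> G" "x \<notin> H"
      by blast
    obtain m where m: "m dvd totient N" "\<And>n. x ^ n mod N \<in> H \<longleftrightarrow> m dvd n"
      using power_mem_units_subgroup_iff[OF less.prems(1) x(1)] by blast
    have "x ^ m mod N \<in> H"
      using m(2) by simp
    then obtain w where "w ^ m = f (x ^ m mod N)"
      by (rule exists_root_of_partial_char[OF less.prems x(1) m(1)])
    then obtain f' where f': "partial_char (adjoin H x) f'" "\<And>h. h \<in> H \<Longrightarrow> f' h = f h"
      by (rule partial_char_adjoin[OF less.prems x(1) m(2)]) blast
    have sub: "units_subgroup (adjoin H x)" "H \<subseteq> adjoin H x" "x \<in> adjoin H x"
      using units_subgroup_adjoin[OF less.prems(1) x(1)] by blast+
    then have "card (G - adjoin H x) < card (G - H)"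
      using x by (intro psubset_card_mono) auto
    then obtain \<chi> where \<chi>: "\<chi> \<in> chars" "\<forall>h\<in>adjoin H x. \<chi> h = f' h"
      using less.hyps sub(1) f'(1) by blast
    then show ?thesis
      using sub(2) f'(2) by (intro bexI[of _ \<chi>]) auto
  qed
qed

lemma exists_dirichlet_char_ne_1:
  assumes a: "a \<in> G" "a \<noteq> 1"
  shows "\<exists>\<chi>\<in>chars. \<chi> a \<noteq> 1"
proof -
  have H: "units_subgroup {1}" and f: "partial_char {1} (\<lambda>_. 1 :: 'a)"
    using N_gt_1 by (simp_all add: units_subgroup_def partial_char_def)
  obtain m where m: "m > 0" "m dvd totient N" "\<And>n. a ^ n mod N \<in> {1} \<longleftrightarrow> m dvd n"
    using power_mem_units_subgroup_iff[OF H a(1)] by blast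
  have "m \<noteq> 1"
    using m(3)[of 1] a by simp
  obtain q where q: "totient N = m * q"
    using m(2) by blast
  then have "0 < q" "q < totient N"
    using totient_pos m(1) \<open>m \<noteq> 1\<close> by (auto intro: Nat.gr0I)
  have "(\<zeta> ^ q) ^ m = 1"
    using q zeta_totient by (simp add: mult.commute flip: power_mult)
  then obtain f' where f': "partial_char (adjoin {1} a) f'" "f' a = \<zeta> ^ q"
    using partial_char_adjoin[OF H f a(1) m(3), of "\<zeta> ^ q"] by auto
  obtain \<chi> where \<chi>: "\<chi> \<in> chars" "\<forall>h\<in>adjoin {1} a. \<chi> h = f' h"
    using partial_char_extends[OF units_subgroup_adjoin(1)[OF H a(1)] f'(1)] by blast
  have "\<chi> a = \<zeta> ^ q"
    using \<chi>(2) units_subgroup_adjoin(3)[OF H a(1)] f'(2) by simp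
  moreover have "\<zeta> ^ q \<noteq> 1"
    using zeta_primitive \<open>0 < q\<close> \<open>q < totient N\<close> by blast
  ultimately show ?thesis
    using \<chi>(1) by (intro bexI[of _ \<chi>]) auto
qed

lemma sum_dirichlet_chars_apply:
  assumes z: "z \<in> G"
  shows "(\<Sum>\<chi>\<in>chars. \<chi> z) = (if z = 1 then of_nat (card chars) else 0)"
proof (cases "z = 1")
  case True
  then have "(\<Sum>\<chi>\<in>chars. \<chi> z) = (\<Sum>\<chi>\<in>chars. 1)"
    using dirichlet_char_1 by (intro sum.cong refl) auto
  then show ?thesis
    using True by simp
next
  case False
  obtain \<chi>0 where \<chi>0: "\<chi>0 \<in> chars" "\<chi>0 z \<noteq> 1"
    using exists_dirichlet_char_ne_1[OF z False] by blast
  define T where "T \<chi> = (\<lambda>a. \<chi>0 a * \<chi> a)" for \<chi> :: "nat \<Rightarrow> 'a"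
  have "inj_on T chars"
  proof (rule inj_onI)
    fix \<chi> \<psi>
    assume "\<chi> \<in> chars" "\<psi> \<in> chars" "T \<chi> = T \<psi>"
    then have "\<chi>0 a * \<chi> a = \<chi>0 a * \<psi> a" for a
      unfolding T_def by meson
    then show "\<chi> = \<psi>"
      using dirichlet_char_unit_nonzero[OF \<chi>0(1)] dirichlet_char_nonunit
        \<open>\<chi> \<in> chars\<close> \<open>\<psi> \<in> chars\<close> by (metis ext mult_left_cancel)
  qed
  moreover have "T ` chars \<subseteq> chars"
    using dirichlet_chars_mult[OF \<chi>0(1)] by (auto simp: T_def)
  ultimately have "bij_betw T chars chars"
    using finite_dirichlet_chars by (simp add: bij_betw_def card_image card_subset_eq)
  then have "(\<Sum>\<chi>\<in>chars. \<chi> z) = (\<Sum>\<chi>\<in>chars. T \<chi> z)"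
    by (rule sum.reindex_bij_betw[symmetric])
  also have "\<dots> = \<chi>0 z * (\<Sum>\<chi>\<in>chars. \<chi> z)"
    by (simp add: T_def sum_distrib_left)
  finally have "(1 - \<chi>0 z) * (\<Sum>\<chi>\<in>chars. \<chi> z) = 0"
    by (simp add: algebra_simps)
  then show ?thesis
    using \<chi>0(2) False by simp
qed

lemma of_nat_card_dirichlet_chars: "of_nat (card chars) = (of_nat (totient N) :: 'a)"
proof -
  define \<chi>1 :: "nat \<Rightarrow> 'a" where "\<chi>1 a = (if a \<in> G then 1 else 0)" for a
  have "\<chi>1 \<in> chars"
    by (auto simp: dirichlet_chars_def \<chi>1_def)
  have trivial_iff: "(\<forall>c\<in>G. \<chi> c = 1) \<longleftrightarrow> \<chi> = \<chi>1" if "\<chi> \<in> chars" for \<chi>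
    using dirichlet_char_nonunit[OF that] by (auto simp: \<chi>1_def)
  have "of_nat (card chars) = (\<Sum>z\<in>G. \<Sum>\<chi>\<in>chars. \<chi> z)"
    by (simp add: sum_dirichlet_chars_apply sum.delta cong: sum.cong)
  also have "\<dots> = (\<Sum>\<chi>\<in>chars. \<Sum>z\<in>G. \<chi> z)"
    by (rule sum.swap)
  also have "\<dots> = (\<Sum>\<chi>\<in>chars. if \<chi> = \<chi>1 then of_nat (totient N) else 0)"
    by (intro sum.cong refl) (simp add: sum_dirichlet_char trivial_iff)
  also have "\<dots> = of_nat (totient N)"
    using \<open>\<chi>1 \<in> chars\<close> finite_dirichlet_chars by simp
  finally show ?thesis .
qed

lemma dirichlet_chars_orthogonality:
  assumes a: "a \<in> G" "a' \<in> G"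
  shows "(\<Sum>\<chi>\<in>chars. \<chi> a * char_inv N \<chi> a') = (if a = a' then of_nat (totient N) else 0)"
proof -
  define z where "z = a * minv N a' mod N"
  have "z \<in> G"
    using a by (simp add: z_def)
  have "(z = 1) \<longleftrightarrow> (a = a')"
  proof
    assume "z = 1"
    then have "minv N a' * a mod N = minv N a' * a' mod N"
      using a by (simp add: z_def mult.commute)
    then show "a = a'"
      by (rule units_mod_mult_cancel[OF minv_in_units_mod[OF a(2)], rotated -1])
        (use a in \<open>simp_all add: units_mod_iff\<close>)
  qed (use a in \<open>simp add: z_def\<close>)
  moreover have "(\<Sum>\<chi>\<in>chars. \<chi> a * char_inv N \<chi> a') = (\<Sum>\<chi>\<in>chars. \<chi> z)"
    using a by (intro sum.cong refl) (simp add: z_def char_inv_def dirichlet_char_mult)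
  ultimately show ?thesis
    using sum_dirichlet_chars_apply[OF \<open>z \<in> G\<close>] of_nat_card_dirichlet_chars by simp
qed

lemma dirichlet_chars_orthogonality_pairs:
  assumes "a \<in> G" "b \<in> G" "a' \<in> G" "b' \<in> G"
  shows "(\<Sum>\<chi>\<in>chars. \<Sum>\<psi>\<in>chars. \<chi> a * \<psi> b * (char_inv N \<chi> a' * char_inv N \<psi> b'))
    = (if a' = a \<and> b' = b then of_nat (totient N) * of_nat (totient N) else 0)"
proof -
  have "(\<Sum>\<chi>\<in>chars. \<Sum>\<psi>\<in>chars. \<chi> a * \<psi> b * (char_inv N \<chi> a' * char_inv N \<psi> b'))
      = (\<Sum>\<chi>\<in>chars. \<chi> a * char_inv N \<chi> a') * (\<Sum>\<psi>\<in>chars. \<psi> b * char_inv N \<psi> b')"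
    by (simp add: sum_product ac_simps)
  then show ?thesis
    using dirichlet_chars_orthogonality[OF assms(1,3)] dirichlet_chars_orthogonality[OF assms(2,4)]
    by auto
qed

end

section \<open>Modular symbols and the projector e_theta\<close>

locale modsym_projection = units_mod_root N \<zeta> + Modules.module smul
  for N and \<zeta> :: "'a::idom" and smul :: "'a \<Rightarrow> 'm::ab_group_add \<Rightarrow> 'm" +
  fixes sb :: "nat \<Rightarrow> nat \<Rightarrow> 'm" and act :: "nat \<Rightarrow> 'm \<Rightarrow> 'm" and \<theta> :: "nat \<Rightarrow> 'a"
  assumes totient_invertible: "\<exists>w. of_nat (totient N) * w = (1::'a)"
    and act_smul: "a \<in> G \<Longrightarrow> act a (smul c x) = smul c (act a x)"
    and act_add: "a \<in> G \<Longrightarrow> act a (x + y) = act a x + act a y"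
    and act_sb: "a \<in> G \<Longrightarrow> unimod N u v \<Longrightarrow> act a (sb u v) = sb (a * u mod N) (a * v mod N)"
    and theta_char: "\<theta> \<in> chars"
begin

abbreviation E :: "'m \<Rightarrow> 'm" where "E \<equiv> e_proj smul act N \<theta>"

abbreviation \<alpha> :: "nat \<Rightarrow> nat \<Rightarrow> (nat \<Rightarrow> 'a) \<Rightarrow> (nat \<Rightarrow> 'a) \<Rightarrow> 'm" where
  "\<alpha> \<equiv> alpha smul sb N"

lemma of_nat_totient_mult_nat_inv: "of_nat (totient N) * nat_inv (totient N) = (1::'a)"
  using totient_invertible nat_inv_eq by metis

lemma act_sum:
  assumes "a \<in> G"
  shows "act a (sum f A) = (\<Sum>x\<in>A. act a (f x))"
proof -
  interpret additive "act a"
    by standard (rule act_add[OF assms])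
  show ?thesis
    by (rule sum)
qed

lemma module_hom_e_proj: "Modules.module_hom smul smul E"
proof unfold_locales
  fix x y
  show "E (x + y) = E x + E y"
    by (simp add: e_proj_def act_add scale_right_distrib sum.distrib)
  fix r
  have "E (smul r x) = smul (nat_inv (totient N))
      (\<Sum>a\<in>G. smul r (smul (char_inv N \<theta> a) (act a x)))"
    by (simp add: e_proj_def act_smul mult.commute)
  also have "\<dots> = smul (nat_inv (totient N))
      (smul r (\<Sum>a\<in>G. smul (char_inv N \<theta> a) (act a x)))"
    by (simp add: scale_sum_right)
  also have "\<dots> = smul r (E x)"
    unfolding e_proj_def by (rule scale_left_commute)
  finally show "E (smul r x) = smul r (E x)" .
qed

lemma mult_mod_left_commute: "c * (g * a mod N) mod N = g * (c * a mod N) mod N"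
  by (metis mod_mult_right_eq mult.left_commute)

lemma act_alpha:
  assumes c: "c \<in> G" and \<chi>: "\<chi> \<in> chars" and \<psi>: "\<psi> \<in> chars" and gh: "coprime g h"
  shows "act c (\<alpha> g h \<chi> \<psi>) = smul (\<chi> c * \<psi> c) (\<alpha> g h \<chi> \<psi>)"
proof -
  define F where "F a b = smul (char_inv N \<chi> a * char_inv N \<psi> b) (sb (g * a mod N) (h * b mod N))"
    for a b
  have \<alpha>_F: "\<alpha> g h \<chi> \<psi> = smul (nat_inv (totient N) ^ 2) (\<Sum>a\<in>G. \<Sum>b\<in>G. F a b)"
    by (simp add: alpha_def F_def)
  have act_F: "act c (F a b) = smul (\<chi> c * \<psi> c) (F (c * a mod N) (c * b mod N))"
    if "a \<in> G" "b \<in> G" for a b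
  proof -
    have "act c (F a b) = smul (char_inv N \<chi> a * char_inv N \<psi> b)
        (sb (g * (c * a mod N) mod N) (h * (c * b mod N) mod N))"
      using that c gh by (simp add: F_def act_smul act_sb unimod_mult_units mult_mod_left_commute)
    also have "char_inv N \<chi> a * char_inv N \<psi> b
        = (\<chi> c * \<psi> c) * (char_inv N \<chi> (c * a mod N) * char_inv N \<psi> (c * b mod N))"
      using char_inv_mult_shift[OF \<chi> c that(1)] char_inv_mult_shift[OF \<psi> c that(2)]
      by (simp add: ac_simps)
    finally show ?thesis
      by (simp add: F_def)
  qed
  have "(\<Sum>a\<in>G. \<Sum>b\<in>G. act c (F a b)) = smul (\<chi> c * \<psi> c) (\<Sum>a\<in>G. \<Sum>b\<in>G. F (c * a mod N) (c * b mod N))"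
    by (simp add: act_F scale_sum_right)
  also have "(\<Sum>a\<in>G. \<Sum>b\<in>G. F (c * a mod N) (c * b mod N)) = (\<Sum>a\<in>G. \<Sum>b\<in>G. F a b)"
    using sum_units_mod_mult_reindex[OF c, of "\<lambda>a. \<Sum>b\<in>G. F a (c * b mod N)"]
      sum_units_mod_mult_reindex[OF c, of "F _"] by simp
  finally show ?thesis
    using c by (simp add: \<alpha>_F act_smul act_sum mult.commute)
qed

lemma e_proj_alpha:
  assumes \<chi>: "\<chi> \<in> chars" and \<psi>: "\<psi> \<in> chars" and gh: "coprime g h"
  shows "E (\<alpha> g h \<chi> \<psi>) = (if \<forall>c\<in>G. \<chi> c * \<psi> c = \<theta> c then \<alpha> g h \<chi> \<psi> else 0)"
proof -
  define \<rho> where "\<rho> c = char_inv N \<theta> c * (\<chi> c * \<psi> c)" for c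
  have "\<rho> \<in> chars"
    unfolding \<rho>_def
    by (intro dirichlet_chars_mult char_inv_in_dirichlet_chars theta_char \<chi> \<psi>)
  have "E (\<alpha> g h \<chi> \<psi>) = smul (nat_inv (totient N)) (\<Sum>c\<in>G. smul (\<rho> c) (\<alpha> g h \<chi> \<psi>))"
    by (simp add: e_proj_def act_alpha[OF _ \<chi> \<psi> gh] \<rho>_def)
  also have "\<dots> = smul (nat_inv (totient N) * (\<Sum>c\<in>G. \<rho> c)) (\<alpha> g h \<chi> \<psi>)"
    unfolding scale_sum_left[symmetric] by simp
  also have "(\<Sum>c\<in>G. \<rho> c) = (if \<forall>c\<in>G. \<rho> c = 1 then of_nat (totient N) else 0)"
    by (rule sum_dirichlet_char[OF \<open>\<rho> \<in> chars\<close>])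
  also have "(\<forall>c\<in>G. \<rho> c = 1) \<longleftrightarrow> (\<forall>c\<in>G. \<chi> c * \<psi> c = \<theta> c)"
  proof (intro ball_cong refl)
    fix c
    assume "c \<in> G"
    then have "char_inv N \<theta> c * \<theta> c = 1"
      by (rule char_inv_mult_self[OF theta_char])
    then show "\<rho> c = 1 \<longleftrightarrow> \<chi> c * \<psi> c = \<theta> c"
      unfolding \<rho>_def by (metis mult.commute mult_left_inverse_unique mult_1_left mult.assoc)
  qed
  finally show ?thesis
    using of_nat_totient_mult_nat_inv by (simp add: mult.commute)
qed

text \<open>Fourier inversion on the pair (a, b): the \<alpha> are the Fourier coefficients of
  (a, b) \<mapsto> [ga : hb], and the orthogonality of characters recovers the symbol.\<close>
lemma sb_eq_sum_alpha:
  assumes a: "a \<in> G" and b: "b \<in> G"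
  shows "sb (g * a mod N) (h * b mod N) = (\<Sum>\<chi>\<in>chars. \<Sum>\<psi>\<in>chars. smul (\<chi> a * \<psi> b) (\<alpha> g h \<chi> \<psi>))"
proof -
  define S where "S a' b' = sb (g * a' mod N) (h * b' mod N)" for a' b'
  define c where "c \<chi> \<psi> a' b' = \<chi> a * \<psi> b * (char_inv N \<chi> a' * char_inv N \<psi> b')"
    for \<chi> \<psi> :: "nat \<Rightarrow> 'a" and a' b'
  let ?e = "of_nat (totient N) :: 'a"
  have "(\<Sum>\<chi>\<in>chars. \<Sum>\<psi>\<in>chars. smul (\<chi> a * \<psi> b) (\<alpha> g h \<chi> \<psi>))
      = smul (nat_inv (totient N) ^ 2)
          (\<Sum>\<chi>\<in>chars. \<Sum>\<psi>\<in>chars. \<Sum>a'\<in>G. \<Sum>b'\<in>G. smul (c \<chi> \<psi> a' b') (S a' b'))"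
    by (simp add: alpha_def S_def c_def scale_sum_right mult.assoc mult.left_commute)
  also have "(\<Sum>\<chi>\<in>chars. \<Sum>\<psi>\<in>chars. \<Sum>a'\<in>G. \<Sum>b'\<in>G. smul (c \<chi> \<psi> a' b') (S a' b'))
      = (\<Sum>a'\<in>G. \<Sum>b'\<in>G. smul (\<Sum>\<chi>\<in>chars. \<Sum>\<psi>\<in>chars. c \<chi> \<psi> a' b') (S a' b'))"
    unfolding scale_sum_left by (rule sum_swap_pairs)
  also have "\<dots> = (\<Sum>a'\<in>G. \<Sum>b'\<in>G. if a' = a \<and> b' = b then smul (?e * ?e) (S a' b') else 0)"
    by (intro sum.cong refl) (simp add: c_def dirichlet_chars_orthogonality_pairs[OF a b])
  also have "\<dots> = (\<Sum>a'\<in>G. if a' = a then \<Sum>b'\<in>G. if b' = b then smul (?e * ?e) (S a' b') else 0 else 0)"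
    by (intro sum.cong refl) simp
  also have "\<dots> = smul (?e * ?e) (S a b)"
    using a b by (simp add: sum.delta)
  also have "smul (nat_inv (totient N) ^ 2) \<dots> = S a b"
  proof -
    have "nat_inv (totient N) ^ 2 * (?e * ?e) = (?e * nat_inv (totient N)) * (?e * nat_inv (totient N))"
      by (simp add: power2_eq_square ac_simps)
    then show ?thesis
      using of_nat_totient_mult_nat_inv by simp
  qed
  finally show ?thesis
    by (simp add: S_def)
qed

abbreviation alpha_gens :: "'m set" where
  "alpha_gens \<equiv> {\<alpha> g h \<chi> (\<lambda>b. \<theta> b * char_inv N \<chi> b) | \<chi> g h.
      \<chi> \<in> chars \<and> g dvd N \<and> h dvd N \<and> coprime g h}"

lemma e_proj_alpha_gen:
  assumes "\<chi> \<in> chars" "coprime g h"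
  shows "E (\<alpha> g h \<chi> (\<lambda>b. \<theta> b * char_inv N \<chi> b)) = \<alpha> g h \<chi> (\<lambda>b. \<theta> b * char_inv N \<chi> b)"
proof -
  have \<psi>: "(\<lambda>b. \<theta> b * char_inv N \<chi> b) \<in> chars"
    by (intro dirichlet_chars_mult theta_char char_inv_in_dirichlet_chars assms(1))
  then have "\<forall>c\<in>G. \<chi> c * (\<theta> c * char_inv N \<chi> c) = \<theta> c"
    using dirichlet_char_twist_iff[OF assms(1) \<psi> theta_char] by simp
  then show ?thesis
    using e_proj_alpha[OF assms(1) \<psi> assms(2)] by simp
qed

lemma e_proj_sb_in_span:
  assumes uv: "unimod N u v"
  shows "E (sb u v) \<in> span alpha_gens"
proof -
  define g where "g = gcd u N"
  define h where "h = gcd v N"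
  have "u < N" "v < N" "coprime (gcd u v) N"
    using uv by (auto simp: unimod_def)
  obtain a b where ab: "a \<in> G" "b \<in> G" "g * a mod N = u" "h * b mod N = v"
    using exists_unit_mult_gcd[OF \<open>u < N\<close>] exists_unit_mult_gcd[OF \<open>v < N\<close>]
    unfolding g_def h_def by blast
  have gh: "coprime g h"
    unfolding g_def h_def by (rule coprime_gcd_gcd) fact
  have E_\<alpha>: "E (\<alpha> g h \<chi> \<psi>) \<in> span alpha_gens" if "\<chi> \<in> chars" "\<psi> \<in> chars" for \<chi> \<psi>
  proof (cases "\<forall>c\<in>G. \<chi> c * \<psi> c = \<theta> c")
    case True
    then have "\<psi> = (\<lambda>b. \<theta> b * char_inv N \<chi> b)"
      using dirichlet_char_twist_iff that theta_char by blast
    moreover have "g dvd N" "h dvd N"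
      by (simp_all add: g_def h_def)
    ultimately have "\<alpha> g h \<chi> \<psi> \<in> alpha_gens"
      using that(1) gh by blast
    then show ?thesis
      using e_proj_alpha[OF that gh] True by (simp add: span_base)
  next
    case False
    then have "E (\<alpha> g h \<chi> \<psi>) = 0"
      using e_proj_alpha[OF that gh] by (simp only: if_not_P if_False)
    then show ?thesis
      by (simp add: span_zero)
  qed
  interpret e_proj: Modules.module_hom smul smul E
    by (rule module_hom_e_proj)
  have "E (sb u v) = (\<Sum>\<chi>\<in>chars. \<Sum>\<psi>\<in>chars. smul (\<chi> a * \<psi> b) (E (\<alpha> g h \<chi> \<psi>)))"
    using sb_eq_sum_alpha[OF ab(1,2), of g h] ab(3,4) by (simp add: e_proj.sum e_proj.scale)
  then show ?thesis
    using E_\<alpha> by (auto intro!: span_sum span_scale)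
qed

theorem span_alpha_gens_eq_range_e_proj:
  assumes "span {sb u v | u v. unimod N u v} = UNIV"
  shows "span alpha_gens = range E"
proof
  interpret e_proj: Modules.module_hom smul smul E
    by (rule module_hom_e_proj)
  have "alpha_gens \<subseteq> range E"
  proof
    fix x
    assume "x \<in> alpha_gens"
    then have "E x = x"
      using e_proj_alpha_gen by blast
    then show "x \<in> range E"
      by (metis rangeI)
  qed
  then show "span alpha_gens \<subseteq> range E"
    by (rule span_minimal) (rule e_proj.subspace_image[OF subspace_UNIV])
  have "range E \<subseteq> span (E ` {sb u v | u v. unimod N u v})"
    using e_proj.spans_image[of UNIV] assms by simp
  also have "\<dots> \<subseteq> span alpha_gens"
    using e_proj_sb_in_span by (intro span_minimal subspace_span) auto
  finally show "range E \<subseteq> span alpha_gens" .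
qed

end

theorem corollary2p11:
  fixes p M N :: nat
    and smul :: "'o::idom \<Rightarrow> 'm::ab_group_add \<Rightarrow> 'm"
    and sb :: "nat \<Rightarrow> nat \<Rightarrow> 'm"
    and act :: "nat \<Rightarrow> 'm \<Rightarrow> 'm"
    and \<theta> :: "nat \<Rightarrow> 'o"
  assumes "prime p" and "odd p" and "M > 0" and "\<not> p dvd M * totient M"
    and "N = M \<or> N = M * p" and "N > 1"
    and "\<forall>n. \<not> p dvd n \<longrightarrow> (\<exists>w::'o. of_nat n * w = 1)"
    and "\<exists>\<zeta>::'o. \<zeta> ^ totient N = 1 \<and> (\<forall>k. 0 < k \<and> k < totient N \<longrightarrow> \<zeta> ^ k \<noteq> 1)"
    and "modsym_space smul N sb act"
    and "\<theta> \<in> dirichlet_chars N" and "\<theta> (N - 1) = 1"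
  shows "Modules.module.span smul
           {alpha smul sb N g h \<chi> (\<lambda>b. \<theta> b * char_inv N \<chi> b) | \<chi> g h.
              \<chi> \<in> dirichlet_chars N \<and> g dvd N \<and> h dvd N \<and> coprime g h}
         = range (e_proj smul act N \<theta>)"
proof -
  obtain \<zeta> :: 'o where \<zeta>: "\<zeta> ^ totient N = 1" "\<And>k. 0 < k \<Longrightarrow> k < totient N \<Longrightarrow> \<zeta> ^ k \<noteq> 1"
    using assms(8) by blast
  have "\<exists>w::'o. of_nat (totient N) * w = 1"
    using assms(7) prime_not_dvd_totient[OF assms(1,4,5)] by blast
  moreover note modsym = assms(9)[unfolded modsym_space_def]
  ultimately interpret modsym_projection N \<zeta> smul sb act \<theta>
    using assms(6,10) \<zeta>
    by (intro modsym_projection.intro units_mod_root.intro units_mod_ring.intro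
        units_mod_root_axioms.intro modsym_projection_axioms.intro conjunct1[OF modsym]) auto
  show ?thesis
    using span_alpha_gens_eq_range_e_proj modsym by blast
qed

end
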